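(* Let $K$ be a non-Archimedean locally compact field of characteristic $p>0$ with group of 1-units $U=1+M_K$. Let $f:U\to U$ be a locally analytic group endomorphism, and suppose there is a power series $\sum_{n\ge0}a_nx^n\in 1+xK[[x]]$ with $f(1+x)=\sum_{n=0}^\infty a_nx^n$ for all $x\in M_K$. Then $a_n\in\mathbb{F}_p$ for all $n\ge0$.
   Context: $M_K$ is the maximal ideal of the ring of integers $R_K$ of $K$; with constant field $\mathbb{F}$ of order $q$ and uniformizer $\pi$, $K=\mathbb{F}((\pi))$, $U=1+\pi\mathbb{F}[[\pi]]$, and $|x|=q^{-v(x)}$. A continuous function $f$ on a ball $B_{\alpha,t}=\{u\in R_K:|u-\alpha|\le t\}$, $t=|\rho|$, is analytic there if $f(u)=\sum_{n\ge0}c_n\left(\frac{u-\alpha}{\rho}\right)^n$ with $c_n\in K$, $c_n\to0$; $f:U\to K$ is locally analytic if each $\alpha\in U$ has a ball $B_{\alpha,t_\alpha}\subset U$, $t_\alpha>0$, on which $f$ is analytic. $\mathbb{F}_p$ denotes the prime subfield of $K$. *)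

theory Defs
  imports "HOL-Computational_Algebra.Formal_Laurent_Series"
begin

text \<open>The local field K = F((pi)) of characteristic p > 0, with F a finite field,
  is modelled as the type 'a fls of formal Laurent series over a finite field 'a.
  The valuation is fls_subdegree (valuation of 0 is +infinity), and the absolute
  value is |x| = q^(-v(x)).\<close>

definition vge :: "'a::zero fls \<Rightarrow> int \<Rightarrow> bool" where
  "vge x N \<longleftrightarrow> x = 0 \<or> fls_subdegree x \<ge> N"

definition RK :: "'a::zero fls set" where
  "RK = {x. vge x 0}"

definition MK :: "'a::zero fls set" where
  "MK = {x. vge x 1}"

definition UK :: "'a::{monoid_add,one} fls set" where
  "UK = {1 + x | x. x \<in> MK}"

definition ballK :: "'a::{ab_group_add} fls \<Rightarrow> 'a fls \<Rightarrow> 'a fls set" where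
  "ballK \<alpha> \<rho> = {u \<in> RK. vge (u - \<alpha>) (fls_subdegree \<rho>)}"

definition tendstoK :: "(nat \<Rightarrow> 'a::ab_group_add fls) \<Rightarrow> 'a fls \<Rightarrow> bool" where
  "tendstoK s L \<longleftrightarrow> (\<forall>N::int. \<exists>M. \<forall>n\<ge>M. vge (s n - L) N)"

definition sumsK :: "(nat \<Rightarrow> 'a::ab_group_add fls) \<Rightarrow> 'a fls \<Rightarrow> bool" where
  "sumsK c L \<longleftrightarrow> tendstoK (\<lambda>n. \<Sum>k<n. c k) L"

definition continuous_onK :: "'a::ab_group_add fls set \<Rightarrow> ('a fls \<Rightarrow> 'a fls) \<Rightarrow> bool" where
  "continuous_onK S f \<longleftrightarrow>
     (\<forall>x\<in>S. \<forall>N::int. \<exists>M::int. \<forall>y\<in>S. vge (y - x) M \<longrightarrow> vge (f y - f x) N)"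

definition analytic_onK :: "('a::field fls \<Rightarrow> 'a fls) \<Rightarrow> 'a fls \<Rightarrow> 'a fls \<Rightarrow> bool" where
  "analytic_onK f \<alpha> \<rho> \<longleftrightarrow> continuous_onK (ballK \<alpha> \<rho>) f \<and>
     (\<exists>c :: nat \<Rightarrow> 'a fls. tendstoK c 0 \<and>
        (\<forall>u\<in>ballK \<alpha> \<rho>. sumsK (\<lambda>n. c n * ((u - \<alpha>) / \<rho>) ^ n) (f u)))"

definition locally_analyticK :: "('a::field fls \<Rightarrow> 'a fls) \<Rightarrow> bool" where
  "locally_analyticK f \<longleftrightarrow>
     (\<forall>\<alpha>\<in>UK. \<exists>\<rho>. \<rho> \<noteq> 0 \<and> ballK \<alpha> \<rho> \<subseteq> UK \<and> analytic_onK f \<alpha> \<rho>)"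

end

theory Submission
  imports Defs "HOL-Computational_Algebra.Polynomial"
begin

text \<open>Raising the series of f(1+x) to the p-th power is harmless in characteristic p:
  Frobenius is additive and continuous, so the result is \<open>\<Sum> a\<^sub>n\<^sup>p (x\<^sup>p)\<^sup>n\<close>. Since f is a
  homomorphism, \<open>f(1+x)\<^sup>p = f((1+x)\<^sup>p) = f(1+x\<^sup>p) = \<Sum> a\<^sub>n (x\<^sup>p)\<^sup>n\<close>. So the power series
  \<open>\<Sum> (a\<^sub>n - a\<^sub>n\<^sup>p) y\<^sup>n\<close> vanishes at all \<open>y = \<pi>^(p k)\<close> with k \<ge> 1; for large k its first nonzero
  term would strictly dominate all others in valuation, so all coefficients vanish. Hence every
  \<open>a\<^sub>n\<close> is a root of \<open>X\<^sup>p - X\<close>, and the p elements of the prime field already are all of them.\<close>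

lemma vge_0 [simp]: "vge 0 N"
  by (simp add: vge_def)

lemma vge_mono: "vge x N \<Longrightarrow> M \<le> N \<Longrightarrow> vge x M"
  by (auto simp: vge_def)

lemma vge_add:
  fixes x y :: "'a::ab_group_add fls"
  assumes "vge x N" "vge y N"
  shows "vge (x + y) N"
proof (cases "x = 0 \<or> y = 0 \<or> x + y = 0")
  case False
  then have "min (fls_subdegree x) (fls_subdegree y) \<le> fls_subdegree (x + y)"
    using fls_plus_subdegree by blast
  with assms False show ?thesis
    by (auto simp: vge_def)
qed (use assms in auto)

lemma vge_uminus [simp]: "vge (- x :: 'a::ab_group_add fls) N \<longleftrightarrow> vge x N"
  by (auto simp: vge_def)

lemma vge_diff: "vge (x :: 'a::ab_group_add fls) N \<Longrightarrow> vge y N \<Longrightarrow> vge (x - y) N"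
  using vge_add[of x N "- y"] by simp

lemma vge_sum: "(\<And>i. i \<in> A \<Longrightarrow> vge (g i :: 'a::ab_group_add fls) N) \<Longrightarrow> vge (sum g A) N"
  by (induction A rule: infinite_finite_induct) (auto intro: vge_add)

lemma vge_mult: "vge (x :: 'a::field fls) N \<Longrightarrow> vge y M \<Longrightarrow> vge (x * y) (N + M)"
  by (cases "x = 0 \<or> y = 0") (auto simp: vge_def)

lemma vge_power: "vge (x :: 'a::field fls) N \<Longrightarrow> vge (x ^ n) (int n * N)"
proof (induction n)
  case (Suc n)
  then have "vge (x * x ^ n) (N + int n * N)"
    by (intro vge_mult)
  then show ?case
    by (simp add: algebra_simps)
qed (simp add: vge_def)

lemma vge_mult_fls_X_power:
  "vge (x * fls_X ^ m :: 'a::semiring_1 fls) N \<longleftrightarrow> vge x (N - int m)"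
proof (cases "x = 0")
  case False
  then show ?thesis
    by (simp add: vge_def fls_subdegree_mult_fls_X_power fls_mult_fls_X_power_nonzero algebra_simps)
qed (simp add: vge_def)

lemma tendstoK_diff:
  assumes "tendstoK s L" "tendstoK t M"
  shows "tendstoK (\<lambda>n. s n - t n) (L - M)"
  unfolding tendstoK_def
proof
  fix N
  obtain M1 where "\<forall>n\<ge>M1. vge (s n - L) N"
    using assms(1) unfolding tendstoK_def by blast
  moreover obtain M2 where "\<forall>n\<ge>M2. vge (t n - M) N"
    using assms(2) unfolding tendstoK_def by blast
  ultimately have "vge (s n - t n - (L - M)) N" if "n \<ge> max M1 M2" for n
    using vge_diff[of "s n - L" N "t n - M"] that by (simp add: algebra_simps)
  then show "\<exists>M'. \<forall>n\<ge>M'. vge (s n - t n - (L - M)) N"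
    by blast
qed

lemma sumsK_diff:
  assumes "sumsK c L" "sumsK d M"
  shows "sumsK (\<lambda>n. c n - d n) (L - M)"
proof -
  have "(\<Sum>k<n. c k - d k) = (\<Sum>k<n. c k) - (\<Sum>k<n. d k)" for n
    by (rule sum_subtractf)
  then show ?thesis
    using tendstoK_diff assms unfolding sumsK_def by simp
qed

lemma sumsK_imp_tendstoK_zero:
  assumes "sumsK c L"
  shows "tendstoK c 0"
  unfolding tendstoK_def
proof
  fix N
  obtain M where M: "\<forall>n\<ge>M. vge ((\<Sum>k<n. c k) - L) N"
    using assms unfolding sumsK_def tendstoK_def by blast
  have "vge (c n) N" if "n \<ge> M" for n
  proof -
    have "c n = ((\<Sum>k<Suc n. c k) - L) - ((\<Sum>k<n. c k) - L)"
      by simp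
    with M that show ?thesis
      by (metis le_Suc_eq vge_diff)
  qed
  then show "\<exists>M. \<forall>n\<ge>M. vge (c n - 0) N"
    by auto
qed

lemma tendstoK_zero_imp_vge_bounded:
  assumes "tendstoK (c :: nat \<Rightarrow> 'a::ab_group_add fls) 0"
  shows "\<exists>C. \<forall>n. vge (c n) C"
proof -
  obtain M where M: "\<forall>n\<ge>M. vge (c n) 0"
    using assms unfolding tendstoK_def by fastforce
  define C where "C = - (\<Sum>i<M. \<bar>fls_subdegree (c i)\<bar>)"
  have "vge (c n) C" for n
  proof (cases "n < M")
    case True
    then have "\<bar>fls_subdegree (c n)\<bar> \<le> (\<Sum>i<M. \<bar>fls_subdegree (c i)\<bar>)"
      by (intro member_le_sum) auto
    then show ?thesis
      by (auto simp: vge_def C_def)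
  next
    case False
    have "C \<le> 0"
      by (simp add: C_def sum_nonneg)
    with False M show ?thesis
      by (meson not_less vge_mono)
  qed
  then show ?thesis
    by blast
qed

lemma sumsK_zero_strictly_dominant_term_eq_0:
  assumes sums: "sumsK c 0"
    and dominant: "\<And>n. n \<noteq> j \<Longrightarrow> vge (c n) (fls_subdegree (c j) + 1)"
  shows "c j = 0"
proof -
  define T where "T = fls_subdegree (c j) + 1"
  obtain N0 where N0: "\<forall>N\<ge>N0. vge ((\<Sum>i<N. c i) - 0) T"
    using sums unfolding sumsK_def tendstoK_def by blast
  define N where "N = max N0 (Suc j)"
  have "j \<in> {..<N}"
    by (simp add: N_def)
  then have "c j = (\<Sum>i<N. c i) - (\<Sum>i\<in>{..<N} - {j}. c i)"
    by (simp add: sum.remove)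
  also have "vge \<dots> T"
    using N0 dominant by (intro vge_diff[OF _ vge_sum]) (auto simp: N_def T_def)
  finally show ?thesis
    by (auto simp: vge_def T_def)
qed

lemma int_mult_gap_ge:
  fixes q k j n :: nat
  assumes "q > 0" "j < n" "j < k"
  shows "int k - 1 - int j \<le> int (k * q * n) - int (q * n) - int (k * q * j)"
proof -
  define e where "e = (int k - 1) * int n - int k * int j"
  have "(int k - 1) * (int j + 1) \<le> (int k - 1) * int n"
    using assms by (intro mult_left_mono) auto
  then have e: "int k - 1 - int j \<le> e"
    by (simp add: e_def algebra_simps)
  have "1 * e \<le> int q * e"
    using assms e by (intro mult_right_mono) auto
  moreover have "int (k * q * n) - int (q * n) - int (k * q * j) = int q * e"
    by (simp add: e_def algebra_simps)
  ultimately show ?thesis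
    using e by linarith
qed

lemma fls_series_vanishing_at_X_powers_eq_0:
  fixes b :: "nat \<Rightarrow> 'a::field fls"
  assumes q: "q > 0"
    and vanish: "\<And>k. k \<ge> 1 \<Longrightarrow> sumsK (\<lambda>n. b n * fls_X ^ (k * q * n)) 0"
  shows "b n = 0"
proof (rule ccontr)
  assume "b n \<noteq> 0"
  define j where "j = (LEAST n. b n \<noteq> 0)"
  have bj: "b j \<noteq> 0"
    unfolding j_def by (rule LeastI) fact
  have below: "b m = 0" if "m < j" for m
    using not_less_Least[of m "\<lambda>n. b n \<noteq> 0"] that unfolding j_def by blast
  obtain C where C: "\<And>n. vge (b n) (C - int (q * n))"
    using tendstoK_zero_imp_vge_bounded[OF sumsK_imp_tendstoK_zero[OF vanish[of 1]]]
    by (auto simp: vge_mult_fls_X_power)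
  define vj where "vj = fls_subdegree (b j)"
  define k where "k = nat (\<bar>vj\<bar> + \<bar>C\<bar>) + j + 2"
  have "b j * fls_X ^ (k * q * j) = 0"
  proof (rule sumsK_zero_strictly_dominant_term_eq_0[OF vanish])
    show "k \<ge> 1"
      by (simp add: k_def)
    fix n assume "n \<noteq> j"
    show "vge (b n * fls_X ^ (k * q * n)) (fls_subdegree (b j * fls_X ^ (k * q * j)) + 1)"
    proof (cases "n < j")
      case False
      with \<open>n \<noteq> j\<close> have "int k - 1 - int j \<le> int (k * q * n) - int (q * n) - int (k * q * j)"
        by (intro int_mult_gap_ge) (auto simp: q k_def)
      moreover have "int k - 1 - int j = \<bar>vj\<bar> + \<bar>C\<bar> + 1"
        by (simp add: k_def)
      ultimately have "C - int (q * n) \<ge> vj + int (k * q * j) + 1 - int (k * q * n)"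
        by linarith
      then show ?thesis
        using C[of n] bj
        by (auto simp: vge_mult_fls_X_power fls_subdegree_mult_fls_X_power vj_def
            intro: vge_mono)
    qed (simp add: below)
  qed
  with bj show False
    by (simp add: fls_mult_fls_X_power_nonzero)
qed

lemma diff_power_prime_CHAR:
  fixes x y :: "'a::comm_ring_1"
  assumes "prime CHAR('a)"
  shows "(x - y) ^ CHAR('a) = x ^ CHAR('a) - y ^ CHAR('a)"
  using freshmans_dream[OF assms refl, of x "- y"] minus_power_prime_CHAR[OF refl assms, of y]
  by simp

lemma tendstoK_power_CHAR:
  fixes s :: "nat \<Rightarrow> 'a::field fls"
  assumes p: "prime CHAR('a)" and lim: "tendstoK s L"
  shows "tendstoK (\<lambda>n. s n ^ CHAR('a)) (L ^ CHAR('a))"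
  unfolding tendstoK_def
proof
  fix N :: int
  have p': "prime CHAR('a fls)"
    using p by simp
  obtain M where M: "\<forall>n\<ge>M. vge (s n - L) (max N 0)"
    using lim unfolding tendstoK_def by blast
  have "int CHAR('a) * max N 0 \<ge> 1 * max N 0"
    using p prime_ge_1_nat by (intro mult_right_mono) auto
  then have "vge ((s n - L) ^ CHAR('a)) N" if "n \<ge> M" for n
    using vge_power[of "s n - L" "max N 0" "CHAR('a)"] M that by (auto intro: vge_mono)
  then show "\<exists>M. \<forall>n\<ge>M. vge (s n ^ CHAR('a) - L ^ CHAR('a)) N"
    using diff_power_prime_CHAR[OF p'] by auto
qed

lemma sumsK_power_CHAR:
  fixes c :: "nat \<Rightarrow> 'a::field fls"
  assumes "prime CHAR('a)" "sumsK c L"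
  shows "sumsK (\<lambda>n. c n ^ CHAR('a)) (L ^ CHAR('a))"
proof -
  have "prime CHAR('a fls)"
    using assms(1) by simp
  then have "(\<Sum>k<n. c k) ^ CHAR('a) = (\<Sum>k<n. c k ^ CHAR('a))" for n
    using freshmans_dream_sum[of "CHAR('a fls)" c] by simp
  then show ?thesis
    using tendstoK_power_CHAR[of "\<lambda>n. \<Sum>k<n. c k" L] assms unfolding sumsK_def by simp
qed

lemma power_CHAR_fixed_imp_of_nat:
  fixes c :: "'a::field"
  assumes p: "prime CHAR('a)" and fixed: "c ^ CHAR('a) = c"
  shows "c \<in> range (of_nat :: nat \<Rightarrow> 'a)"
proof (rule ccontr)
  assume c: "c \<notin> range (of_nat :: nat \<Rightarrow> 'a)"
  let ?p = "CHAR('a)"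
  define P :: "'a poly" where "P = monom 1 ?p - [:0, 1:]"
  have p2: "?p \<ge> 2"
    using p prime_ge_2_nat by blast
  have roots: "poly P x = 0 \<longleftrightarrow> x ^ ?p = x" for x
    by (simp add: P_def poly_monom)
  have "coeff P ?p = 1"
    using p2 by (simp add: P_def coeff_monom coeff_pCons split: nat.split)
  then have P: "P \<noteq> 0"
    by auto
  have "degree P \<le> ?p"
    unfolding P_def using p2 by (intro degree_diff_le) (auto simp: degree_monom_le)
  have of_nat_fixed: "(of_nat i :: 'a) ^ ?p = of_nat i" for i
    by (induction i) (use p2 in \<open>simp_all add: freshmans_dream[OF p refl] add.commute\<close>)
  have "of_nat m \<noteq> (of_nat n :: 'a)" if "m < n" "n < ?p" for m n
    using of_nat_eq_iff_char_dvd[OF that(1)] nat_dvd_not_less[of "n - m" ?p] that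
    by (meson less_imp_diff_less zero_less_diff)
  then have "inj_on (of_nat :: nat \<Rightarrow> 'a) {..<?p}"
    by (intro inj_onI) (metis lessThan_iff linorder_neqE_nat)
  then have "card (insert c (of_nat ` {..<?p})) = ?p + 1"
    using c by (subst card_insert_disjoint) (auto simp: card_image)
  moreover have "card (insert c (of_nat ` {..<?p})) \<le> card {x. poly P x = 0}"
    using c fixed of_nat_fixed poly_roots_finite[OF P]
    by (intro card_mono) (auto simp: roots)
  moreover have "card {x. poly P x = 0} \<le> degree P"
    using P by (rule card_poly_roots_bound)
  ultimately show False
    using \<open>degree P \<le> ?p\<close> by linarith
qed

lemma UK_mult:
  assumes "u \<in> UK" "v \<in> UK"
  shows "(u * v :: 'a::field fls) \<in> UK"
proof -
  obtain x y where u: "u = 1 + x" and v: "v = 1 + y" and x: "vge x 1" and y: "vge y 1"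
    using assms unfolding UK_def MK_def by blast
  have "vge (x * y) 1"
    using vge_mult[OF x y] by (rule vge_mono) simp
  then have "x + y + x * y \<in> MK"
    using x y by (auto simp: MK_def intro: vge_add)
  moreover have "u * v = 1 + (x + y + x * y)"
    by (simp add: u v algebra_simps)
  ultimately show ?thesis
    by (auto simp: UK_def)
qed

lemma one_in_UK: "(1 :: 'a::{monoid_add,one} fls) \<in> UK"
  by (auto simp: UK_def MK_def intro!: exI[of _ 0])

lemma UK_power: "(u :: 'a::field fls) \<in> UK \<Longrightarrow> u ^ n \<in> UK"
  by (induction n) (auto intro: UK_mult one_in_UK)

lemma MK_power: "(x :: 'a::field fls) \<in> MK \<Longrightarrow> n > 0 \<Longrightarrow> x ^ n \<in> MK"
  using vge_power[of x 1 n] by (auto simp: MK_def intro: vge_mono)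

lemma hom_power:
  fixes f :: "'a::field fls \<Rightarrow> 'a fls"
  assumes hom: "\<And>u v. u \<in> UK \<Longrightarrow> v \<in> UK \<Longrightarrow> f (u * v) = f u * f v"
    and u: "u \<in> UK" and n: "n > 0"
  shows "f (u ^ n) = f u ^ n"
  using n
proof (induction n)
  case (Suc n)
  then show ?case
    using hom[OF u UK_power[OF u, of n]] by (cases "n = 0") auto
qed simp

lemma coeff_minus_power_CHAR_series_vanishes:
  fixes f :: "'a::field fls \<Rightarrow> 'a fls"
  assumes p: "prime CHAR('a)"
    and hom: "\<And>u v. u \<in> UK \<Longrightarrow> v \<in> UK \<Longrightarrow> f (u * v) = f u * f v"
    and ser: "\<And>x. x \<in> MK \<Longrightarrow> sumsK (\<lambda>n. a n * x ^ n) (f (1 + x))"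
    and x: "x \<in> MK"
  shows "sumsK (\<lambda>n. (a n - a n ^ CHAR('a)) * (x ^ CHAR('a)) ^ n) 0"
proof -
  let ?p = "CHAR('a)"
  have "f (1 + x ^ ?p) = f ((1 + x) ^ ?p)"
    using freshmans_dream[of "CHAR('a fls)" 1 x] p by simp
  also have "\<dots> = f (1 + x) ^ ?p"
    using x p prime_gt_0_nat by (intro hom_power[OF hom]) (auto simp: UK_def)
  finally have "sumsK (\<lambda>n. a n * (x ^ ?p) ^ n) (f (1 + x) ^ ?p)"
    using ser[of "x ^ ?p"] MK_power[OF x] p prime_gt_0_nat by simp
  moreover have "(a n * x ^ n) ^ ?p = a n ^ ?p * (x ^ ?p) ^ n" for n
    by (simp add: power_mult_distrib flip: power_mult) (simp add: mult.commute)
  then have "sumsK (\<lambda>n. a n ^ ?p * (x ^ ?p) ^ n) (f (1 + x) ^ ?p)"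
    using sumsK_power_CHAR[OF p ser[OF x]] by simp
  ultimately have "sumsK (\<lambda>n. a n * (x ^ ?p) ^ n - a n ^ ?p * (x ^ ?p) ^ n) 0"
    using sumsK_diff by fastforce
  then show ?thesis
    by (simp add: left_diff_distrib)
qed

theorem lemma2p1:
  fixes f :: "'a::{field,finite} fls \<Rightarrow> 'a fls"
    and a :: "nat \<Rightarrow> 'a fls"
  assumes maps: "\<And>u. u \<in> UK \<Longrightarrow> f u \<in> UK"
    and hom: "\<And>u v. u \<in> UK \<Longrightarrow> v \<in> UK \<Longrightarrow> f (u * v) = f u * f v"
    and la: "locally_analyticK f"
    and a0: "a 0 = 1"
    and ser: "\<And>x. x \<in> MK \<Longrightarrow> sumsK (\<lambda>n. a n * x ^ n) (f (1 + x))"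
  shows "\<forall>n. a n \<in> range (of_nat :: nat \<Rightarrow> 'a fls)"
proof
  fix n
  have p: "prime CHAR('a)"
    by (rule prime_CHAR_semidom[OF finite_imp_CHAR_pos[OF finite_UNIV]])
  have "sumsK (\<lambda>n. (a n - a n ^ CHAR('a)) * fls_X ^ (k * CHAR('a) * n)) 0" if "k \<ge> 1" for k
  proof -
    have "fls_X ^ k \<in> MK"
      using that by (simp add: MK_def vge_def)
    from coeff_minus_power_CHAR_series_vanishes[OF p hom ser this] show ?thesis
      by (simp only: power_mult)
  qed
  then have "a n - a n ^ CHAR('a) = 0"
    using fls_series_vanishing_at_X_powers_eq_0[where b = "\<lambda>n. a n - a n ^ CHAR('a)"]
      p prime_gt_0_nat by blast
  then have "a n ^ CHAR('a) = a n"
    by (metis right_minus_eq)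
  then have "prime CHAR('a fls)" "a n ^ CHAR('a fls) = a n"
    using p by simp_all
  then show "a n \<in> range (of_nat :: nat \<Rightarrow> 'a fls)"
    by (rule power_CHAR_fixed_imp_of_nat)
qed

end
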